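(* Let $x\in\mathrm{SUBT}(K_n)$ be such that $G_x$ is 3-edge-connected and cubic, and let $\mathcal{C}\subseteq E_x$ be any 2-factor of $G_x$. Define $y\in\mathbb{R}^{E_n}$ by $y_e=\frac12$ for $e\in\mathcal{C}$, $y_e=1$ for $e\in E_x\setminus\mathcal{C}$, and $y_e=0$ otherwise. Then $y\in\mathrm{SUBT}(K_n)$.
   Context: $K_n$ is the complete graph on $V_n=\{1,\dots,n\}$ with edge set $E_n$; $\delta(U)$ denotes the set of edges with exactly one endpoint in $U$. $\mathrm{SUBT}(K_n)=\{x\in[0,1]^{E_n}: x(\delta(\{i\}))=2\ \forall i,\ x(\delta(U))\ge2\ \forall\,\emptyset\ne U\subsetneq V_n\}$. $G_x=(V_n,E_x)$ with $E_x=\{e:x_e>0\}$. A 2-factor is a spanning subgraph in which every vertex has degree exactly 2. *)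

theory Defs
  imports "HOL-Analysis.Analysis"
begin

definition Vn :: "nat \<Rightarrow> nat set" where
  "Vn n = {1..n}"

definition En :: "nat \<Rightarrow> nat set set" where
  "En n = {e. e \<subseteq> Vn n \<and> card e = 2}"

definition delta :: "nat \<Rightarrow> nat set \<Rightarrow> nat set set" where
  "delta n U = {e \<in> En n. card (e \<inter> U) = 1}"

definition xsum :: "(nat set \<Rightarrow> real) \<Rightarrow> nat set set \<Rightarrow> real" where
  "xsum x F = (\<Sum>e\<in>F. x e)"

text \<open>SUBT(K_n): points of [0,1]^{E_n} (coordinates outside E_n are required to be 0,
  so the vector is determined by its values on E_n).\<close>
definition SUBT :: "nat \<Rightarrow> (nat set \<Rightarrow> real) set" where
  "SUBT n = {x. (\<forall>e. e \<notin> En n \<longrightarrow> x e = 0)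
              \<and> (\<forall>e \<in> En n. 0 \<le> x e \<and> x e \<le> 1)
              \<and> (\<forall>i \<in> Vn n. xsum x (delta n {i}) = 2)
              \<and> (\<forall>U. U \<noteq> {} \<and> U \<subset> Vn n \<longrightarrow> xsum x (delta n U) \<ge> 2)}"

definition supp :: "nat \<Rightarrow> (nat set \<Rightarrow> real) \<Rightarrow> nat set set" where
  "supp n x = {e \<in> En n. x e > 0}"

definition deg :: "nat set set \<Rightarrow> nat \<Rightarrow> nat" where
  "deg F v = card {e \<in> F. v \<in> e}"

definition connected_graph :: "nat set \<Rightarrow> nat set set \<Rightarrow> bool" where
  "connected_graph V F \<longleftrightarrow>
     (\<forall>u \<in> V. \<forall>v \<in> V. (u, v) \<in> {(a, b). {a, b} \<in> F}\<^sup>*)"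

definition k_edge_connected :: "nat \<Rightarrow> nat set \<Rightarrow> nat set set \<Rightarrow> bool" where
  "k_edge_connected k V F \<longleftrightarrow>
     (\<forall>D \<subseteq> F. card D < k \<longrightarrow> connected_graph V (F - D))"

definition cubic :: "nat set \<Rightarrow> nat set set \<Rightarrow> bool" where
  "cubic V F \<longleftrightarrow> (\<forall>v \<in> V. deg F v = 3)"

definition two_factor :: "nat set \<Rightarrow> nat set set \<Rightarrow> nat set set \<Rightarrow> bool" where
  "two_factor V F C \<longleftrightarrow> C \<subseteq> F \<and> (\<forall>v \<in> V. deg C v = 2)"

end

theory Submission
  imports Defs
begin

text \<open>Every cut of the 3-edge-connected cubic graph \<open>G\<^sub>x\<close> contains at least three edges, and by
  the handshake argument an even number of them lie on the 2-factor \<open>\<C>\<close>. A cut with \<open>d\<close>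
  support edges of which \<open>c\<close> lie on \<open>\<C>\<close> has \<open>y\<close>-weight \<open>d - c/2\<close>; with \<open>c\<close> even,
  \<open>c \<le> d\<close> and \<open>d \<ge> 3\<close> this is at least 2. Around a single vertex \<open>c = 2\<close> and \<open>d = 3\<close>.\<close>

lemma finite_En: "finite (En n)"
proof (rule finite_subset)
  show "En n \<subseteq> Pow (Vn n)" unfolding En_def by auto
  show "finite (Pow (Vn n))" unfolding Vn_def by simp
qed

lemma finite_delta: "finite (delta n U)"
  unfolding delta_def using finite_En by simp

lemma delta_singleton_Int:
  assumes "F \<subseteq> En n"
  shows "delta n {i} \<inter> F = {e \<in> F. i \<in> e}"
  using assms unfolding delta_def by (auto simp: Int_insert_right split: if_splits)

lemma sum_deg_eq_card_boundary:
  assumes "finite U" "finite C" "\<forall>e\<in>C. card e = 2"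
  shows "(\<Sum>v\<in>U. deg C v) = card {e\<in>C. card (e \<inter> U) = 1} + 2 * card {e\<in>C. card (e \<inter> U) = 2}"
proof -
  have "(\<Sum>v\<in>U. deg C v) = (\<Sum>v\<in>U. \<Sum>e\<in>C. of_bool (v \<in> e) :: nat)"
    unfolding deg_def using assms(2) by (simp add: Collect_conj_eq Int_commute)
  also have "\<dots> = (\<Sum>e\<in>C. \<Sum>v\<in>U. of_bool (v \<in> e) :: nat)"
    by (rule sum.swap)
  also have "\<dots> = (\<Sum>e\<in>C. of_bool (card (e \<inter> U) = 1) + 2 * of_bool (card (e \<inter> U) = 2))"
  proof (rule sum.cong)
    fix e assume "e \<in> C"
    then have "card (e \<inter> U) \<le> 2"
      using assms(3) by (metis card_mono card.infinite inf_le1 zero_neq_numeral)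
    moreover have "(\<Sum>v\<in>U. of_bool (v \<in> e) :: nat) = card (e \<inter> U)"
      using assms(1) by (simp add: Int_commute Collect_mem_eq)
    ultimately show "(\<Sum>v\<in>U. of_bool (v \<in> e) :: nat) =
        of_bool (card (e \<inter> U) = 1) + 2 * of_bool (card (e \<inter> U) = 2)"
      by auto
  qed simp
  also have "\<dots> = card {e\<in>C. card (e \<inter> U) = 1} + 2 * card {e\<in>C. card (e \<inter> U) = 2}"
    using assms(2) by (simp add: sum.distrib sum_distrib_left[symmetric] Collect_conj_eq Int_commute)
  finally show ?thesis .
qed

lemma even_card_delta_Int_two_regular:
  assumes "C \<subseteq> En n" "\<forall>v\<in>Vn n. deg C v = 2" "U \<subseteq> Vn n"
  shows "even (card (delta n U \<inter> C))"
proof -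
  have "finite U" using assms(3) finite_subset unfolding Vn_def by auto
  moreover have "finite C" using assms(1) finite_En finite_subset by blast
  moreover have "\<forall>e\<in>C. card e = 2" using assms(1) unfolding En_def by auto
  moreover have "delta n U \<inter> C = {e\<in>C. card (e \<inter> U) = 1}"
    using assms(1) unfolding delta_def by auto
  ultimately have "(\<Sum>v\<in>U. deg C v) = card (delta n U \<inter> C) + 2 * card {e\<in>C. card (e \<inter> U) = 2}"
    using sum_deg_eq_card_boundary by simp
  moreover have "even (\<Sum>v\<in>U. deg C v)" using assms(2,3) by (simp add: subset_iff)
  ultimately show ?thesis by simp
qed

lemma connected_graph_crossing_edge:
  assumes "connected_graph V F" "u \<in> U" "u \<in> V" "w \<in> V" "w \<notin> U"
  obtains a b where "{a, b} \<in> F" "a \<in> U" "b \<notin> U"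
proof -
  have walk: "(u, w) \<in> {(a, b). {a, b} \<in> F}\<^sup>*"
    using assms(1,3,4) unfolding connected_graph_def by auto
  have "\<exists>a b. {a, b} \<in> F \<and> a \<in> U \<and> b \<notin> U"
  proof (rule ccontr)
    assume no_crossing: "\<nexists>a b. {a, b} \<in> F \<and> a \<in> U \<and> b \<notin> U"
    from walk have "w \<in> U"
    proof (induction rule: rtrancl_induct)
      case base
      show ?case using assms(2) .
    next
      case (step a b)
      then have "{a, b} \<in> F" "a \<in> U" by auto
      with no_crossing show ?case by blast
    qed
    with assms(5) show False by simp
  qed
  then show ?thesis using that by blast
qed

lemma k_edge_connected_card_cut:
  assumes "k_edge_connected k (Vn n) F" "F \<subseteq> En n" "U \<noteq> {}" "U \<subset> Vn n"
  shows "k \<le> card (delta n U \<inter> F)"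
proof (rule ccontr)
  define D where "D = delta n U \<inter> F"
  assume "\<not> k \<le> card (delta n U \<inter> F)"
  then have "connected_graph (Vn n) (F - D)"
    using assms(1) unfolding k_edge_connected_def D_def by auto
  moreover obtain u w where "u \<in> U" "w \<in> Vn n" "w \<notin> U" using assms(3,4) by auto
  ultimately obtain a b where ab: "{a, b} \<in> F - D" "a \<in> U" "b \<notin> U"
    using assms(4) connected_graph_crossing_edge by (metis psubsetD)
  then have "{a, b} \<inter> U = {a}" by auto
  then have "{a, b} \<in> D"
    using ab assms(2) unfolding D_def delta_def by auto
  with ab show False by simp
qed

lemma xsum_half_on_two_factor:
  assumes "finite F" "C \<subseteq> S"
  shows "xsum (\<lambda>e. if e \<in> C then 1/2 else if e \<in> S then 1 else 0) F
       = real (card (F \<inter> S)) - real (card (F \<inter> C)) / 2"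
proof -
  have "xsum (\<lambda>e. if e \<in> C then 1/2 else if e \<in> S then 1 else 0) F
      = (\<Sum>e\<in>F. of_bool (e \<in> S) - of_bool (e \<in> C) / 2)"
    unfolding xsum_def by (rule sum.cong) (use assms(2) in auto)
  also have "\<dots> = real (card (F \<inter> S)) - real (card (F \<inter> C)) / 2"
    using assms(1) by (simp add: sum_subtractf sum_divide_distrib[symmetric])
  finally show ?thesis .
qed

theorem mainTheorem7:
  fixes n :: nat and x :: "nat set \<Rightarrow> real" and C :: "nat set set"
  assumes "x \<in> SUBT n"
    and "k_edge_connected 3 (Vn n) (supp n x)"
    and "cubic (Vn n) (supp n x)"
    and "two_factor (Vn n) (supp n x) C"
  shows "(\<lambda>e. if e \<in> C then 1/2 else if e \<in> supp n x then 1 else 0) \<in> SUBT n"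
proof -
  define S where "S = supp n x"
  define y where "y = (\<lambda>e. if e \<in> C then 1/2 else if e \<in> S then 1 else (0::real))"
  have SE: "S \<subseteq> En n" unfolding S_def supp_def by auto
  have CS: "C \<subseteq> S" using assms(4) unfolding two_factor_def S_def by auto
  have CE: "C \<subseteq> En n" using CS SE by auto
  have degC: "\<forall>v\<in>Vn n. deg C v = 2" using assms(4) unfolding two_factor_def by auto
  have degS: "\<forall>v\<in>Vn n. deg S v = 3" using assms(3) unfolding cubic_def S_def by auto
  have y_delta: "xsum y (delta n U) = real (card (delta n U \<inter> S)) - real (card (delta n U \<inter> C)) / 2"
    for U unfolding y_def using xsum_half_on_two_factor[OF finite_delta CS] .
  have vertex: "xsum y (delta n {i}) = 2" if "i \<in> Vn n" for i
    using that degC degS y_delta delta_singleton_Int[OF SE] delta_singleton_Int[OF CE]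
    unfolding deg_def by simp
  have cut: "xsum y (delta n U) \<ge> 2" if U: "U \<noteq> {}" "U \<subset> Vn n" for U
  proof -
    have "3 \<le> card (delta n U \<inter> S)"
      using k_edge_connected_card_cut[OF assms(2) _ U] SE unfolding S_def by simp
    moreover have "card (delta n U \<inter> C) \<le> card (delta n U \<inter> S)"
      using CS by (intro card_mono finite_Int) (auto simp: finite_delta)
    moreover obtain t where "card (delta n U \<inter> C) = 2 * t"
      using even_card_delta_Int_two_regular[OF CE degC] U by blast
    ultimately have "2 + t \<le> card (delta n U \<inter> S)" by presburger
    with \<open>card (delta n U \<inter> C) = 2 * t\<close> show ?thesis using y_delta by simp
  qed
  have "y \<in> SUBT n"
    unfolding SUBT_def using SE CS vertex cut unfolding y_def by auto
  then show ?thesis unfolding y_def S_def .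
qed

end
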